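(* Let $D=[0,1]^2\setminus\{(0,0),(1,1)\}$ and let $J\colon D\to\mathbb{R}$ be a Jamesian function. Suppose there is a function $w\colon(0,1)\to(0,\infty)$ such that \[ J(a,b)=\frac{w(a)}{w(a)+w(b)}\quad\text{for all }a,b\in(0,1) \] (i.e. $J$ is derived from the Bradley--Terry model with worths depending on the winning percentages). Then $J$ coincides on all of $D$ with the James function $P(a,b)=\dfrac{a(1-b)}{a(1-b)+b(1-a)}$.
   Context: Let $D=[0,1]^2\setminus\{(0,0),(1,1)\}$. A function $J\colon D\to\mathbb{R}$ is called Jamesian if it satisfies, for all $(a,b)\in D$: (a) $J(a,\tfrac12)=a$; (b) $J(a,0)=1$ for $0<a\le 1$; (c) $J(b,a)=1-J(a,b)$; (d) $J(1-b,1-a)=J(a,b)$; (e) $J(a,b)$ is a non-decreasing function of $a$ for each $0\le b\le 1$ and a strictly increasing function of $a$ for each $0<b<1$. *)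

theory Defs
  imports Complex_Main
begin

definition jdom :: "(real \<times> real) set" where
  "jdom = ({0..1} \<times> {0..1}) - {(0,0),(1,1)}"

text \<open>A Jamesian function, J : D -> R, represented as a curried real function whose
  values outside D are irrelevant.\<close>
definition jamesian :: "(real \<Rightarrow> real \<Rightarrow> real) \<Rightarrow> bool" where
  "jamesian J \<longleftrightarrow>
     (\<forall>a\<in>{0..1}. J a (1/2) = a) \<and>
     (\<forall>a. 0 < a \<and> a \<le> 1 \<longrightarrow> J a 0 = 1) \<and>
     (\<forall>(a,b)\<in>jdom. J b a = 1 - J a b) \<and>
     (\<forall>(a,b)\<in>jdom. J (1 - b) (1 - a) = J a b) \<and>
     (\<forall>b\<in>{0..1}. mono_on {a. (a,b) \<in> jdom} (\<lambda>a. J a b)) \<and>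
     (\<forall>b\<in>{0<..<1}. strict_mono_on {a. (a,b) \<in> jdom} (\<lambda>a. J a b))"

definition james_fun :: "real \<Rightarrow> real \<Rightarrow> real" where
  "james_fun a b = a * (1 - b) / (a * (1 - b) + b * (1 - a))"

end

theory Submission
  imports Defs
begin

text \<open>On the edges of the square the axioms alone fix \<open>J\<close>: (b) gives the edge \<open>b = 0\<close>,
  reflection (c) turns it into \<open>a = 0\<close>, (d) into \<open>b = 1\<close>, and (c) once more into \<open>a = 1\<close>;
  there \<open>J\<close> agrees with the James function. In the interior, axiom (a) with \<open>b = 1/2\<close> forces
  the worths to be proportional to the odds, \<open>w a = w (1/2) * a / (1 - a)\<close>, and the
  Bradley--Terry quotient of odds is exactly the James function.\<close>

lemma jamesian_bottom_edge:
  assumes "jamesian J" "0 < a" "a \<le> 1"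
  shows "J a 0 = 1"
  using assms unfolding jamesian_def by blast

lemma jamesian_left_edge:
  assumes J: "jamesian J" and "0 < b" "b \<le> 1"
  shows "J 0 b = 0"
proof -
  have "(b, 0) \<in> jdom" using assms unfolding jdom_def by auto
  then have "J 0 b = 1 - J b 0" using J unfolding jamesian_def by blast
  then show ?thesis using jamesian_bottom_edge[OF J] assms by simp
qed

lemma jamesian_top_edge:
  assumes J: "jamesian J" and "0 \<le> a" "a < 1"
  shows "J a 1 = 0"
proof -
  have "(a, 1) \<in> jdom" using assms unfolding jdom_def by auto
  then have "J 0 (1 - a) = J a 1" using J unfolding jamesian_def by fastforce
  then show ?thesis using jamesian_left_edge[OF J, of "1 - a"] assms by simp
qed

lemma jamesian_right_edge:
  assumes J: "jamesian J" and "0 \<le> b" "b < 1"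
  shows "J 1 b = 1"
proof -
  have "(b, 1) \<in> jdom" using assms unfolding jdom_def by auto
  then have "J 1 b = 1 - J b 1" using J unfolding jamesian_def by blast
  then show ?thesis using jamesian_top_edge[OF J] assms by simp
qed

lemma jamesian_eq_james_fun_on_edges:
  assumes J: "jamesian J" and ab: "(a, b) \<in> jdom" and edge: "a \<in> {0, 1} \<or> b \<in> {0, 1}"
  shows "J a b = james_fun a b"
proof -
  have box: "0 \<le> a" "a \<le> 1" "0 \<le> b" "b \<le> 1" "(a, b) \<noteq> (0, 0)" "(a, b) \<noteq> (1, 1)"
    using ab unfolding jdom_def by auto
  consider "b = 0" | "a = 0" "b \<noteq> 0" | "b = 1" "a \<noteq> 0" | "a = 1" "b \<noteq> 0" "b \<noteq> 1"
    using edge by blast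
  then show ?thesis
  proof cases
    case 1 then show ?thesis
      using box jamesian_bottom_edge[OF J, of a] by (simp add: james_fun_def)
  next
    case 2 then show ?thesis
      using box jamesian_left_edge[OF J, of b] by (simp add: james_fun_def)
  next
    case 3 then show ?thesis
      using box jamesian_top_edge[OF J, of a] by (simp add: james_fun_def)
  next
    case 4 then show ?thesis
      using box jamesian_right_edge[OF J, of b] by (simp add: james_fun_def)
  qed
qed

lemma bradley_terry_worth_eq_odds:
  fixes w c a :: real
  assumes "w > 0" "c > 0" "a < 1" and "a = w / (w + c)"
  shows "w = c * a / (1 - a)"
proof -
  have "a * (w + c) = w" using assms by (simp add: field_simps)
  then have "w * (1 - a) = c * a" by (simp add: algebra_simps)
  then show ?thesis using assms(3) by (simp add: field_simps)
qed

lemma bradley_terry_odds_eq_james_fun: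
  fixes a b c :: real
  assumes "c > 0" "0 < a" "a < 1" "0 < b" "b < 1"
  shows "(c * a / (1 - a)) / (c * a / (1 - a) + c * b / (1 - b)) = james_fun a b"
proof -
  define d where "d = (1 - a) * (1 - b)"
  have d: "d > 0" using assms by (simp add: d_def)
  have "c * a / (1 - a) = c * (a * (1 - b)) / d"
    using assms by (simp add: d_def)
  moreover have "c * a / (1 - a) + c * b / (1 - b) = c * (a * (1 - b) + b * (1 - a)) / d"
    using assms by (simp add: d_def field_simps)
  ultimately have "(c * a / (1 - a)) / (c * a / (1 - a) + c * b / (1 - b))
      = c * (a * (1 - b)) / (c * (a * (1 - b) + b * (1 - a)))"
    using d by simp
  also have "\<dots> = james_fun a b"
    using assms(1) by (simp add: james_fun_def)
  finally show ?thesis .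
qed

theorem proposition4p1:
  fixes J :: "real \<Rightarrow> real \<Rightarrow> real" and w :: "real \<Rightarrow> real"
  assumes "jamesian J"
    and "\<forall>a\<in>{0<..<1}. w a > 0"
    and "\<forall>a\<in>{0<..<1}. \<forall>b\<in>{0<..<1}. J a b = w a / (w a + w b)"
  shows "\<forall>(a,b)\<in>jdom. J a b = james_fun a b"
proof clarify
  fix a b assume ab: "(a, b) \<in> jdom"
  show "J a b = james_fun a b"
  proof (cases "a \<in> {0, 1} \<or> b \<in> {0, 1}")
    case True then show ?thesis using jamesian_eq_james_fun_on_edges[OF assms(1) ab] by blast
  next
    case False
    then have interior: "a \<in> {0<..<1}" "b \<in> {0<..<1}" using ab unfolding jdom_def by auto
    define c where "c = w (1/2)"
    have c: "c > 0" using assms(2) by (simp add: c_def)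
    have odds: "w x = c * x / (1 - x)" if "x \<in> {0<..<1}" for x
    proof (rule bradley_terry_worth_eq_odds)
      have "J x (1/2) = x" using that assms(1) unfolding jamesian_def by simp
      moreover have "J x (1/2) = w x / (w x + c)" using that assms(3) by (simp add: c_def)
      ultimately show "x = w x / (w x + c)" by simp
    qed (use that assms(2) c in auto)
    have "J a b = w a / (w a + w b)" using assms(3) interior by blast
    also have "\<dots> = (c * a / (1 - a)) / (c * a / (1 - a) + c * b / (1 - b))"
      using odds interior by simp
    also have "\<dots> = james_fun a b"
      using interior c by (intro bradley_terry_odds_eq_james_fun) auto
    finally show ?thesis .
  qed
qed

end
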